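(* Let $\mathcal{R}$ be a ring and let $(\mathcal{C}^{\bullet},\partial)$ be a bigraded cochain complex of $\mathcal{R}$-modules as described in the context. Then there are two commutative diagrams with exact rows and exact columns. The first has rows \[ 0\to B^{2}(\mathcal{C},\partial)\cap\mathcal{C}^{2,0}\hookrightarrow B^{2}(\mathcal{C},\partial)\xrightarrow{\pi_{1}}\mathcal{B}^{2}_{1}\to0, \] \[ 0\to Z^{2}(\mathcal{N}_{0},\overline{\partial})\hookrightarrow Z^{2}(\mathcal{C},\partial)\xrightarrow{\pi_{1}}\ker(\rho_{2})\to0, \] \[ 0\to\frac{Z^{2}(\mathcal{N}_{0},\overline{\partial})}{B^{2}(\mathcal{C},\partial)\cap\mathcal{C}^{2,0}}\to H^{2}(\mathcal{C},\partial)\to\frac{\ker(\rho_{2})}{\mathcal{B}^{2}_{1}}\to0, \] and the second has rows \[ 0\to\mathcal{B}^{2}_{1}\cap\mathcal{C}^{1,1}\hookrightarrow\mathcal{B}^{2}_{1}\xrightarrow{\pi_{2}}B^{2}(\mathcal{C}^{0,\bullet},\partial_{0,1})\to0, \] \[ 0\to\ker(\varrho_{2})\hookrightarrow\ker(\rho_{2})\xrightarrow{\pi_{2}}\mathcal{Z}^{2}_{2}\to0, \] \[ 0\to\frac{\ker(\varrho_{2})}{\mathcal{B}^{2}_{1}\cap\mathcal{C}^{1,1}}\to\frac{\ker(\rho_{2})}{\mathcal{B}^{2}_{1}}\to\frac{\mathcal{Z}^{2}_{2}}{B^{2}(\mathcal{C}^{0,\bullet},\partial_{0,1})}\to0. \]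 In each diagram the vertical maps from the first to the second row are inclusions, those from the second to the third row are the canonical quotient projections, and the maps of the third row are induced by those of the second row.
   Context: Setting: $\mathcal{C}^{\bullet}=\bigoplus_{k}\mathcal{C}^{k}$ is a graded $\mathcal{R}$-module with compatible bigrading $\mathcal{C}^{k}=\bigoplus_{p+q=k}\mathcal{C}^{p,q}$, $\mathcal{C}^{p,q}=\{0\}$ if $p<0$ or $q<0$; $\partial$ is $\mathcal{R}$-linear of degree $1$, $\partial^{2}=0$, and $\partial=\partial_{2,-1}+\partial_{1,0}+\partial_{0,1}$ with $\partial_{i,j}(\mathcal{C}^{p,q})\subseteq\mathcal{C}^{p+i,q+j}$. For $\eta\in\mathcal{C}^{k}$, $\eta_{p,q}$ is its $\mathcal{C}^{p,q}$-component. $G^{q}\mathcal{C}:=\bigoplus_{j\geq q}\mathcal{C}^{i,j}$ and $\pi_{q}:\mathcal{C}\to G^{q}\mathcal{C}$ is the projection along the bigrading. $Z,B,H$ denote cocycles, coboundaries, cohomology; $(\mathcal{C}^{0,\bullet},\partial_{0,1})$ is a cochain complex. Let $\mathcal{N}^{p,q}:=\ker(\partial_{0,1}|_{\mathcal{C}^{p,q}})\cap\ker(\partial_{2,-1}|_{\mathcal{C}^{p,q}})$ and, for $q\ge0$, $\mathcal{N}_{q}:=\bigoplus_{p}\mathcal{N}^{p-q,q}$ (the degree-$m$ part being $\mathcal{N}^{m-q,q}$); each $\mathcal{N}_{q}$ is a subcomplex of $(\mathcal{C},\partial)$, with differential $\overline{\partial}:=\partial|_{\mathcal{N}_q}=\partial_{1,0}|_{\mathcal{N}_q}$.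 Let $\mathcal{M}^{k}:=\{\eta\in\mathcal{C}^{k}\mid(\partial\eta)_{i,j}\in B^{k+1}(\mathcal{N}_{j},\overline{\partial})\ \text{for all } i+j=k+1\}$, $\mathcal{Z}^{k}_{q}:=\{\pi_{q}(\eta)\mid\eta\in\mathcal{M}^{k},\ \pi_{q}(\partial\eta)=0\}$ and $\mathcal{B}^{k}_{q}:=\pi_{q}(B^{k}(\mathcal{C},\partial))$. Let $\mathcal{A}^{k}:=\{\pi_{1}(\eta)\mid\eta\in\mathcal{C}^{k},\ \pi_{1}(\partial\eta)=0\}$ and $\mathcal{J}^{k}:=\mathcal{A}^{k}\cap\mathcal{C}^{k-1,1}$. For $\xi\in\mathcal{A}^{k}$ and any $\eta\in\mathcal{C}^{k}$ with $\pi_{1}\eta=\xi$, $\pi_{1}(\partial\eta)=0$, the element $\partial_{2,-1}\xi_{k-1,1}+\partial_{1,0}\eta_{k,0}$ is a $(k+1)$-cocycle of $(\mathcal{N}_{0},\overline{\partial})$ whose class depends only on $\xi$; this defines the linear map $\rho_{k}:\mathcal{A}^{k}\to H^{k+1}(\mathcal{N}_{0},\overline{\partial})$, $\rho_{k}(\xi):=[\partial_{2,-1}\xi_{k-1,1}+\partial_{1,0}\eta_{k,0}]$, and $\varrho_{k}:=\rho_{k}|_{\mathcal{J}^{k}}$. *)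

theory Defs
  imports "HOL-Algebra.Algebra"
begin

text \<open>The bigrading
  C = (+)_{p,q} C^{p,q} (p, q natural numbers, so C^{p,q} = 0 for negative indices
  automatically) is given by the family of component projections pr p q, and the
  differential is given by its three bihomogeneous parts.\<close>

record 'a bicx =
  pr  :: "nat \<Rightarrow> nat \<Rightarrow> 'a \<Rightarrow> 'a"
  d21 :: "'a \<Rightarrow> 'a"
  d10 :: "'a \<Rightarrow> 'a"
  d01 :: "'a \<Rightarrow> 'a"

definition lmodule :: "('r::ring_1 \<Rightarrow> 'a::ab_group_add \<Rightarrow> 'a) \<Rightarrow> bool" where
  "lmodule sc \<longleftrightarrow> (\<forall>r x y. sc r (x + y) = sc r x + sc r y) \<and>
     (\<forall>r s x. sc (r + s) x = sc r x + sc s x) \<and>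
     (\<forall>r s x. sc (r * s) x = sc r (sc s x)) \<and> (\<forall>x. sc 1 x = x)"

definition rlinear :: "('r::ring_1 \<Rightarrow> 'a::ab_group_add \<Rightarrow> 'a) \<Rightarrow> ('a \<Rightarrow> 'a) \<Rightarrow> bool" where
  "rlinear sc f \<longleftrightarrow> (\<forall>x y. f (x + y) = f x + f y) \<and> (\<forall>r x. f (sc r x) = sc r (f x))"

definition Cpq :: "'a bicx \<Rightarrow> nat \<Rightarrow> nat \<Rightarrow> 'a set" where
  "Cpq K p q = range (pr K p q)"

definition Ck :: "'a::zero bicx \<Rightarrow> nat \<Rightarrow> 'a set" where
  "Ck K k = {x. \<forall>p q. pr K p q x \<noteq> 0 \<longrightarrow> p + q = k}"

definition dif :: "'a::plus bicx \<Rightarrow> 'a \<Rightarrow> 'a" where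
  "dif K x = d21 K x + d10 K x + d01 K x"

definition bigraded_complex :: "('r::ring_1 \<Rightarrow> 'a::ab_group_add \<Rightarrow> 'a) \<Rightarrow> 'a bicx \<Rightarrow> bool" where
  "bigraded_complex sc K \<longleftrightarrow>
     lmodule sc \<and>
     (\<forall>p q. rlinear sc (pr K p q)) \<and>
     (\<forall>p q p' q' x. pr K p q (pr K p' q' x) = (if (p, q) = (p', q') then pr K p' q' x else 0)) \<and>
     (\<forall>x. finite {(p, q). pr K p q x \<noteq> 0}) \<and>
     (\<forall>x. x = (\<Sum>(p, q) \<in> {(p, q). pr K p q x \<noteq> 0}. pr K p q x)) \<and>
     rlinear sc (d21 K) \<and> rlinear sc (d10 K) \<and> rlinear sc (d01 K) \<and>
     (\<forall>p q. d21 K ` Cpq K p q \<subseteq> (if q = 0 then {0} else Cpq K (p + 2) (q - 1))) \<and>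
     (\<forall>p q. d10 K ` Cpq K p q \<subseteq> Cpq K (p + 1) q) \<and>
     (\<forall>p q. d01 K ` Cpq K p q \<subseteq> Cpq K p (q + 1)) \<and>
     (\<forall>x. dif K (dif K x) = 0)"

definition piq :: "'a::comm_monoid_add bicx \<Rightarrow> nat \<Rightarrow> 'a \<Rightarrow> 'a" where
  "piq K q x = (\<Sum>(i, j) \<in> {(i, j). pr K i j x \<noteq> 0 \<and> q \<le> j}. pr K i j x)"

definition Zc :: "'a::{zero,plus} bicx \<Rightarrow> nat \<Rightarrow> 'a set" where
  "Zc K k = {x \<in> Ck K k. dif K x = 0}"

definition Bc :: "'a::{zero,plus} bicx \<Rightarrow> nat \<Rightarrow> 'a set" where
  "Bc K k = (if k = 0 then {0} else dif K ` Ck K (k - 1))"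

definition Npq :: "'a::zero bicx \<Rightarrow> nat \<Rightarrow> nat \<Rightarrow> 'a set" where
  "Npq K p q = {x \<in> Cpq K p q. d01 K x = 0 \<and> d21 K x = 0}"

definition Ndeg :: "'a::zero bicx \<Rightarrow> nat \<Rightarrow> nat \<Rightarrow> 'a set" where
  "Ndeg K q m = (if q \<le> m then Npq K (m - q) q else {0})"

definition ZN :: "'a::{zero,plus} bicx \<Rightarrow> nat \<Rightarrow> nat \<Rightarrow> 'a set" where
  "ZN K q m = {x \<in> Ndeg K q m. dif K x = 0}"

definition BN :: "'a::{zero,plus} bicx \<Rightarrow> nat \<Rightarrow> nat \<Rightarrow> 'a set" where
  "BN K q m = (if m = 0 then {0} else dif K ` Ndeg K q (m - 1))"

definition Mk :: "'a::{zero,plus} bicx \<Rightarrow> nat \<Rightarrow> 'a set" where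
  "Mk K k = {\<eta> \<in> Ck K k. \<forall>i j. i + j = k + 1 \<longrightarrow> pr K i j (dif K \<eta>) \<in> BN K j (k + 1)}"

definition Zcal :: "'a::comm_monoid_add bicx \<Rightarrow> nat \<Rightarrow> nat \<Rightarrow> 'a set" where
  "Zcal K q k = {piq K q \<eta> | \<eta>. \<eta> \<in> Mk K k \<and> piq K q (dif K \<eta>) = 0}"

definition Bcal :: "'a::comm_monoid_add bicx \<Rightarrow> nat \<Rightarrow> nat \<Rightarrow> 'a set" where
  "Bcal K q k = piq K q ` Bc K k"

definition Acal :: "'a::comm_monoid_add bicx \<Rightarrow> nat \<Rightarrow> 'a set" where
  "Acal K k = {piq K 1 \<eta> | \<eta>. \<eta> \<in> Ck K k \<and> piq K 1 (dif K \<eta>) = 0}"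

definition Jcal :: "'a::comm_monoid_add bicx \<Rightarrow> nat \<Rightarrow> 'a set" where
  "Jcal K k = Acal K k \<inter> Cpq K (k - 1) 1"

text \<open>rho_k(xi) as the coset (class in H^{k+1}(N_0)) of
  d21 xi_{k-1,1} + d10 eta_{k,0}, for a chosen lift eta of xi.\<close>
definition rho :: "'a::comm_monoid_add bicx \<Rightarrow> nat \<Rightarrow> 'a \<Rightarrow> 'a set" where
  "rho K k \<xi> =
     (let \<eta> = (SOME \<eta>. \<eta> \<in> Ck K k \<and> piq K 1 \<eta> = \<xi> \<and> piq K 1 (dif K \<eta>) = 0)
      in (\<lambda>b. (d21 K (pr K (k - 1) 1 \<xi>) + d10 K (pr K k 0 \<eta>)) + b) ` BN K 0 (k + 1))"

definition ker_rho :: "'a::comm_monoid_add bicx \<Rightarrow> nat \<Rightarrow> 'a set" where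
  "ker_rho K k = {\<xi> \<in> Acal K k. rho K k \<xi> = BN K 0 (k + 1)}"

definition ker_varrho :: "'a::comm_monoid_add bicx \<Rightarrow> nat \<Rightarrow> 'a set" where
  "ker_varrho K k = ker_rho K k \<inter> Jcal K k"

definition agrp :: "'a::ab_group_add set \<Rightarrow> 'a monoid" where
  "agrp S = \<lparr>carrier = S, monoid.mult = (+), one = 0\<rparr>"

text \<open>Map between quotients induced by f: the coset S of H is sent to the union of the
  cosets H' + f x, x in S (which is the single coset H' + f x when f(H) is in H').\<close>
definition induced :: "'b monoid \<Rightarrow> 'b set \<Rightarrow> ('a \<Rightarrow> 'b) \<Rightarrow> 'a set \<Rightarrow> 'b set" where
  "induced G' H' f S = (\<Union>x\<in>S. H' #>\<^bsub>G'\<^esub> f x)"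

definition ses :: "'a monoid \<Rightarrow> 'b monoid \<Rightarrow> 'c monoid \<Rightarrow> ('a \<Rightarrow> 'b) \<Rightarrow> ('b \<Rightarrow> 'c) \<Rightarrow> bool" where
  "ses A B C f g \<longleftrightarrow> group A \<and> group B \<and> group C \<and> f \<in> hom A B \<and> g \<in> hom B C \<and>
     inj_on f (carrier A) \<and> f ` carrier A = kernel B C g \<and> g ` carrier B = carrier C"

end

theory Submission
  imports Defs
begin

(* Both diagrams are instances of the 3x3 lemma for an additive map p and subgroups B1 <= B2
   of an abelian group: the rows ker(p|Bi) -> Bi -> p(Bi) are exact, hence so is the induced
   row of quotients. The first diagram is the case p = pi_1, B1 = B^2, B2 = Z^2, the second the
   case p = pi_2, B1 = Bcal^2_1 = pi_1(B^2), B2 = ker rho_2; what remains is to identify the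
   corners. The central identification is ker rho_k = pi_1(Z^k): for any lift eta of xi the
   cocycle d21 xi_{k-1,1} + d10 eta_{k,0} representing rho_k(xi) is d eta itself, so
   rho_k(xi) = 0 iff d eta = d w for some w in N^{k,0}, and then eta - w is a cocycle lifting xi.
   Likewise Zcal^k_q = pi_q(Z^k), by killing the components of d eta of bidegree (k+1-j, j),
   j < q, one at a time with elements of N^{k-j,j}; and pi_{k+1}(d y) = d01 y_{0,k} for y in C^k
   identifies pi_2(Bcal^2_1) with B^2(C^{0,*}, d01). *)

definition add_subgroup :: "'a::ab_group_add set \<Rightarrow> bool" where
  "add_subgroup S \<longleftrightarrow> 0 \<in> S \<and> (\<forall>x\<in>S. \<forall>y\<in>S. x + y \<in> S) \<and> (\<forall>x\<in>S. - x \<in> S)"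

lemma
  assumes "add_subgroup S"
  shows add_subgroup_zero: "0 \<in> S"
    and add_subgroup_add: "x \<in> S \<Longrightarrow> y \<in> S \<Longrightarrow> x + y \<in> S"
    and add_subgroup_uminus: "x \<in> S \<Longrightarrow> - x \<in> S"
    and add_subgroup_diff: "x \<in> S \<Longrightarrow> y \<in> S \<Longrightarrow> x - y \<in> S"
  using assms unfolding add_subgroup_def diff_conv_add_uminus by blast+

lemma add_subgroup_image:
  assumes "add_subgroup B" "additive f"
  shows "add_subgroup (f ` B)"
proof -
  interpret additive f by (rule assms(2))
  show ?thesis unfolding add_subgroup_def
  proof (intro conjI ballI)
    show "0 \<in> f ` B" using add_subgroup_zero[OF assms(1)] zero by force
  next
    fix x y assume "x \<in> f ` B" "y \<in> f ` B"
    then show "x + y \<in> f ` B" using add_subgroup_add[OF assms(1)] by (auto simp: add[symmetric])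
  next
    fix x assume "x \<in> f ` B"
    then show "- x \<in> f ` B" using add_subgroup_uminus[OF assms(1)] by (auto simp: minus[symmetric])
  qed
qed

lemma add_subgroup_kernel:
  assumes "add_subgroup B" "additive f"
  shows "add_subgroup {x \<in> B. f x = 0}"
  using assms unfolding add_subgroup_def
  by (simp add: additive.zero additive.add additive.minus)

lemma agrp_simps [simp]:
  "carrier (agrp S) = S" "x \<otimes>\<^bsub>agrp S\<^esub> y = x + y" "\<one>\<^bsub>agrp S\<^esub> = 0"
  by (simp_all add: agrp_def)

lemma r_coset_agrp: "H #>\<^bsub>agrp S\<^esub> a = (\<lambda>h. h + a) ` H"
  unfolding r_coset_def by auto

lemma comm_group_agrp:
  assumes "add_subgroup S"
  shows "comm_group (agrp S)"
proof (rule comm_groupI)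
  fix x assume "x \<in> carrier (agrp S)"
  then show "\<exists>y\<in>carrier (agrp S). y \<otimes>\<^bsub>agrp S\<^esub> x = \<one>\<^bsub>agrp S\<^esub>"
    using assms by (intro bexI[of _ "- x"]) (simp_all add: add_subgroup_uminus)
qed (use assms in \<open>simp_all add: add_subgroup_zero add_subgroup_add add.assoc add.commute\<close>)

lemma group_agrp: "add_subgroup S \<Longrightarrow> group (agrp S)"
  using comm_group_agrp comm_group.axioms(2) by blast

lemma normal_agrp:
  assumes "add_subgroup A" "add_subgroup B" "A \<subseteq> B"
  shows "A \<lhd> agrp B"
proof -
  interpret comm_group "agrp B" using comm_group_agrp assms(2) .
  have "inv\<^bsub>agrp B\<^esub> x = - x" if "x \<in> B" for x
    using that assms(2) by (intro inv_equality) (simp_all add: add_subgroup_uminus)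
  then have "subgroup A (agrp B)"
    using assms add_subgroup_zero[OF assms(1)]
    by (intro subgroupI) (auto simp: add_subgroup_add add_subgroup_uminus)
  then show ?thesis by (rule subgroup_imp_normal)
qed

lemma group_agrp_Mod:
  "add_subgroup A \<Longrightarrow> add_subgroup B \<Longrightarrow> A \<subseteq> B \<Longrightarrow> group (agrp B Mod A)"
  using normal_agrp normal.factorgroup_is_group by blast

lemma carrier_agrp_Mod: "carrier (agrp B Mod A) = (\<lambda>a. (\<lambda>h. h + a) ` A) ` B"
  by (simp add: carrier_FactGroup r_coset_agrp)

lemma mult_agrp_Mod:
  assumes "add_subgroup A"
  shows "(\<lambda>h. h + a) ` A \<otimes>\<^bsub>agrp B Mod A\<^esub> (\<lambda>h. h + b) ` A = (\<lambda>h. h + (a + b)) ` A"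
proof -
  have "h + a + (k + b) = (h + k) + (a + b)" for h k :: 'a by (simp add: algebra_simps)
  moreover have "h + (a + b) = (h + a) + (0 + b)" for h by (simp add: algebra_simps)
  ultimately show ?thesis
    using assms unfolding mult_FactGroup set_mult_def
    by (auto simp: add_subgroup_zero add_subgroup_add)
qed

lemma coset_eq_iff:
  assumes "add_subgroup A"
  shows "(\<lambda>h. h + a) ` A = (\<lambda>h. h + b) ` A \<longleftrightarrow> a - b \<in> A"
proof
  assume "(\<lambda>h. h + a) ` A = (\<lambda>h. h + b) ` A"
  moreover have "0 + a \<in> (\<lambda>h. h + a) ` A" using assms add_subgroup_zero by blast
  ultimately obtain h where "h \<in> A" "a = h + b" by auto
  then show "a - b \<in> A" by simp
next
  assume "a - b \<in> A"
  show "(\<lambda>h. h + a) ` A = (\<lambda>h. h + b) ` A"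
  proof (intro equalityI image_subsetI)
    fix h assume "h \<in> A"
    show "h + a \<in> (\<lambda>h. h + b) ` A"
      by (rule rev_image_eqI[of "h + (a - b)"])
        (use \<open>h \<in> A\<close> \<open>a - b \<in> A\<close> assms in \<open>simp_all add: add_subgroup_add\<close>)
    show "h + b \<in> (\<lambda>h. h + a) ` A"
      by (rule rev_image_eqI[of "h - (a - b)"])
        (use \<open>h \<in> A\<close> \<open>a - b \<in> A\<close> assms in \<open>simp_all add: add_subgroup_diff\<close>)
  qed
qed

lemma coset_eq_self_iff: "add_subgroup A \<Longrightarrow> (\<lambda>h. h + a) ` A = A \<longleftrightarrow> a \<in> A"
  using coset_eq_iff[of A a 0] by simp

lemma induced_coset:
  assumes "add_subgroup H'" "additive f" "f ` H \<subseteq> H'" "0 \<in> H"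
  shows "induced (agrp S) H' f ((\<lambda>h. h + a) ` H) = (\<lambda>k. k + f a) ` H'"
proof -
  have "(\<lambda>k. k + f (h + a)) ` H' = (\<lambda>k. k + f a) ` H'" if "h \<in> H" for h
    using that assms by (simp add: coset_eq_iff additive.add image_subset_iff)
  then show ?thesis
    unfolding induced_def r_coset_agrp using assms(4) by auto
qed

lemma induced_hom:
  assumes "additive f" "add_subgroup A" "add_subgroup A'" "add_subgroup B'"
    "A \<subseteq> B" "f ` A \<subseteq> A'" "f ` B \<subseteq> B'"
  shows "induced (agrp B') A' f \<in> hom (agrp B Mod A) (agrp B' Mod A')"
  unfolding hom_def carrier_agrp_Mod
  using assms
  by (auto simp del: mult_FactGroup
      simp: induced_coset add_subgroup_zero add_subgroup_add mult_agrp_Mod additive.add)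

lemma ses_kernel_image:
  assumes "add_subgroup B" "additive p"
  shows "ses (agrp {x \<in> B. p x = 0}) (agrp B) (agrp (p ` B)) id p"
  using assms
  by (auto simp: ses_def group_agrp add_subgroup_kernel add_subgroup_image hom_def kernel_def
      additive.add)

lemma ses_quotient:
  assumes "add_subgroup A" "add_subgroup B" "A \<subseteq> B"
  shows "ses (agrp A) (agrp B) (agrp B Mod A) id (\<lambda>x. A #>\<^bsub>agrp B\<^esub> x)"
  using assms normal.r_coset_hom_Mod[OF normal_agrp[OF assms]]
  by (auto simp: ses_def group_agrp group_agrp_Mod hom_def kernel_def carrier_FactGroup
      r_coset_agrp coset_eq_self_iff)

lemma induced_id_coset:
  assumes "add_subgroup B" "A \<subseteq> B" "0 \<in> A"
  shows "induced (agrp S) B id ((\<lambda>h. h + a) ` A) = (\<lambda>h. h + a) ` B"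
  using induced_coset[OF assms(1), of id A] assms(2,3) by (simp add: additive_def)

lemma image_induced_eq_kernel:
  assumes p: "additive p" and B: "add_subgroup B1" "add_subgroup B2" "B1 \<subseteq> B2"
  defines "A1 \<equiv> {x \<in> B1. p x = 0}" and "A2 \<equiv> {x \<in> B2. p x = 0}"
  shows "induced (agrp B2) B1 id ` carrier (agrp A2 Mod A1) =
    kernel (agrp B2 Mod B1) (agrp (p ` B2) Mod p ` B1) (induced (agrp (p ` B2)) (p ` B1) p)"
    (is "?f ` _ = kernel _ _ ?g")
proof -
  have f_coset: "?f ((\<lambda>h. h + a) ` A1) = (\<lambda>h. h + a) ` B1" for a
    unfolding A1_def
    by (intro induced_id_coset[OF B(1)]) (auto simp: additive.zero[OF p] add_subgroup_zero[OF B(1)])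
  have g_coset: "?g ((\<lambda>h. h + b) ` B1) = (\<lambda>h. h + p b) ` p ` B1" for b
    using induced_coset[OF add_subgroup_image[OF B(1) p] p, of B1] add_subgroup_zero[OF B(1)]
    by simp
  show ?thesis
  proof (intro equalityI subsetI)
    fix V assume "V \<in> ?f ` carrier (agrp A2 Mod A1)"
    then obtain a where "a \<in> A2" "V = (\<lambda>h. h + a) ` B1"
      unfolding carrier_agrp_Mod by (auto simp: f_coset)
    then show "V \<in> kernel (agrp B2 Mod B1) (agrp (p ` B2) Mod p ` B1) ?g"
      by (auto simp: kernel_def carrier_agrp_Mod g_coset A2_def)
  next
    fix V assume "V \<in> kernel (agrp B2 Mod B1) (agrp (p ` B2) Mod p ` B1) ?g"
    then obtain b where b: "b \<in> B2" "V = (\<lambda>h. h + b) ` B1" "(\<lambda>h. h + p b) ` p ` B1 = p ` B1"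
      unfolding kernel_def carrier_agrp_Mod by (auto simp: g_coset)
    then obtain b1 where b1: "b1 \<in> B1" "p b = p b1"
      using coset_eq_self_iff[OF add_subgroup_image[OF B(1) p]] by blast
    define a where "a = b - b1"
    have "b1 \<in> B2" using b1(1) B(3) by blast
    then have "a \<in> A2"
      using b(1) b1(2) add_subgroup_diff[OF B(2)] additive.diff[OF p] unfolding a_def A2_def by simp
    moreover have "V = (\<lambda>h. h + a) ` B1"
      using b(2) b1(1) coset_eq_iff[OF B(1)] unfolding a_def by simp
    ultimately show "V \<in> ?f ` carrier (agrp A2 Mod A1)"
      unfolding carrier_agrp_Mod image_image f_coset by blast
  qed
qed

lemma ses_induced_quotients:
  assumes p: "additive p" and B: "add_subgroup B1" "add_subgroup B2" "B1 \<subseteq> B2"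
  defines "A1 \<equiv> {x \<in> B1. p x = 0}" and "A2 \<equiv> {x \<in> B2. p x = 0}"
  shows "ses (agrp A2 Mod A1) (agrp B2 Mod B1) (agrp (p ` B2) Mod p ` B1)
           (induced (agrp B2) B1 id) (induced (agrp (p ` B2)) (p ` B1) p)"
proof -
  have A: "add_subgroup A1" "add_subgroup A2" "A1 \<subseteq> A2" "A1 \<subseteq> B1" "A2 \<subseteq> B2"
    using B p add_subgroup_kernel unfolding A1_def A2_def by auto
  have C: "add_subgroup (p ` B1)" "add_subgroup (p ` B2)" "p ` B1 \<subseteq> p ` B2"
    using B p add_subgroup_image by auto
  have "induced (agrp B2) B1 id \<in> hom (agrp A2 Mod A1) (agrp B2 Mod B1)"
    using A(4,5) by (intro induced_hom[OF _ A(1) B(1,2) A(3)]) (auto simp: additive_def)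
  moreover have "induced (agrp (p ` B2)) (p ` B1) p \<in> hom (agrp B2 Mod B1) (agrp (p ` B2) Mod p ` B1)"
    using B(3) by (intro induced_hom[OF p B(1) C(1,2)]) auto
  moreover have "inj_on (induced (agrp B2) B1 id) (carrier (agrp A2 Mod A1))"
  proof (rule inj_onI)
    fix U V
    assume "U \<in> carrier (agrp A2 Mod A1)" "V \<in> carrier (agrp A2 Mod A1)"
      and "induced (agrp B2) B1 id U = induced (agrp B2) B1 id V"
    then obtain a b where ab: "a \<in> A2" "b \<in> A2" "U = (\<lambda>h. h + a) ` A1" "V = (\<lambda>h. h + b) ` A1"
      and "(\<lambda>h. h + a) ` B1 = (\<lambda>h. h + b) ` B1"
      unfolding carrier_agrp_Mod using induced_id_coset[OF B(1) A(4) add_subgroup_zero[OF A(1)]]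
      by auto
    then have "a - b \<in> B1" "a - b \<in> A2" using coset_eq_iff B(1) add_subgroup_diff A(2) by blast+
    then have "a - b \<in> A1" unfolding A1_def A2_def by blast
    then show "U = V" using ab coset_eq_iff A(1) by blast
  qed
  moreover have "induced (agrp (p ` B2)) (p ` B1) p ` carrier (agrp B2 Mod B1) =
      carrier (agrp (p ` B2) Mod p ` B1)"
    using induced_coset[OF C(1) p, of B1] add_subgroup_zero[OF B(1)]
    unfolding carrier_agrp_Mod image_image by simp
  moreover have "group (agrp A2 Mod A1)" "group (agrp B2 Mod B1)" "group (agrp (p ` B2) Mod p ` B1)"
    using group_agrp_Mod A B C by auto
  ultimately show ?thesis
    using image_induced_eq_kernel[OF p B] unfolding ses_def A1_def A2_def by blast
qed

definition exact_3x3_diagram ::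
  "'a::ab_group_add set \<Rightarrow> 'a set \<Rightarrow> 'b::ab_group_add set \<Rightarrow> 'a set \<Rightarrow> 'a set \<Rightarrow> 'b set \<Rightarrow>
   ('a \<Rightarrow> 'b) \<Rightarrow> bool" where
  "exact_3x3_diagram X11 X12 X13 X21 X22 X23 p \<longleftrightarrow>
     ses (agrp X11) (agrp X12) (agrp X13) id p \<and>
     ses (agrp X21) (agrp X22) (agrp X23) id p \<and>
     ses (agrp X21 Mod X11) (agrp X22 Mod X12) (agrp X23 Mod X13)
         (induced (agrp X22) X12 id) (induced (agrp X23) X13 p) \<and>
     ses (agrp X11) (agrp X21) (agrp X21 Mod X11) id (\<lambda>x. X11 #>\<^bsub>agrp X21\<^esub> x) \<and>
     ses (agrp X12) (agrp X22) (agrp X22 Mod X12) id (\<lambda>x. X12 #>\<^bsub>agrp X22\<^esub> x) \<and>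
     ses (agrp X13) (agrp X23) (agrp X23 Mod X13) id (\<lambda>x. X13 #>\<^bsub>agrp X23\<^esub> x) \<and>
     (\<forall>x\<in>X12. id (p x) = p (id x)) \<and>
     (\<forall>x\<in>X21. induced (agrp X22) X12 id (X11 #>\<^bsub>agrp X21\<^esub> x) = X12 #>\<^bsub>agrp X22\<^esub> id x) \<and>
     (\<forall>x\<in>X22. induced (agrp X23) X13 p (X12 #>\<^bsub>agrp X22\<^esub> x) = X13 #>\<^bsub>agrp X23\<^esub> p x)"

lemma exact_3x3_diagram_kernel_image:
  assumes p: "additive p" and B: "add_subgroup B1" "add_subgroup B2" "B1 \<subseteq> B2"
  shows "exact_3x3_diagram {x \<in> B1. p x = 0} B1 (p ` B1) {x \<in> B2. p x = 0} B2 (p ` B2) p"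
proof -
  have id: "additive id" by (simp add: additive_def)
  have A: "add_subgroup {x \<in> B1. p x = 0}" "add_subgroup {x \<in> B2. p x = 0}"
    using B p add_subgroup_kernel by auto
  have C: "add_subgroup (p ` B1)" "add_subgroup (p ` B2)"
    using B p add_subgroup_image by auto
  have "\<forall>x\<in>{x \<in> B2. p x = 0}. induced (agrp B2) B1 id
      ({x \<in> B1. p x = 0} #>\<^bsub>agrp {x \<in> B2. p x = 0}\<^esub> x) = B1 #>\<^bsub>agrp B2\<^esub> id x"
    unfolding r_coset_agrp
    using induced_id_coset[OF B(1)] add_subgroup_zero[OF B(1)] additive.zero[OF p] by auto
  moreover have "\<forall>x\<in>B2. induced (agrp (p ` B2)) (p ` B1) p (B1 #>\<^bsub>agrp B2\<^esub> x)
      = p ` B1 #>\<^bsub>agrp (p ` B2)\<^esub> p x"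
    unfolding r_coset_agrp using induced_coset[OF C(1) p] add_subgroup_zero[OF B(1)] by blast
  moreover note ses_kernel_image[OF B(1) p] ses_kernel_image[OF B(2) p]
    ses_induced_quotients[OF p B] ses_quotient[OF A] B(3) ses_quotient[OF B] ses_quotient[OF C]
  moreover have "{x \<in> B1. p x = 0} \<subseteq> {x \<in> B2. p x = 0}" "p ` B1 \<subseteq> p ` B2"
    using B(3) by auto
  ultimately show ?thesis
    unfolding exact_3x3_diagram_def by simp
qed

locale bigraded_cochain_complex =
  fixes sc :: "'r::ring_1 \<Rightarrow> 'a::ab_group_add \<Rightarrow> 'a" and K :: "'a bicx"
  assumes bigraded: "bigraded_complex sc K"
begin

lemma
  shows additive_pr: "additive (pr K p q)"
    and pr_pr: "pr K p q (pr K p' q' x) = (if (p, q) = (p', q') then pr K p' q' x else 0)"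
    and finite_support: "finite {(p, q). pr K p q x \<noteq> 0}"
    and sum_pr: "(\<Sum>(p, q) \<in> {(p, q). pr K p q x \<noteq> 0}. pr K p q x) = x"
    and additive_d21: "additive (d21 K)"
    and additive_d10: "additive (d10 K)"
    and additive_d01: "additive (d01 K)"
    and d21_bidegree: "y \<in> Cpq K p q \<Longrightarrow> d21 K y \<in> (if q = 0 then {0} else Cpq K (p + 2) (q - 1))"
    and d10_Cpq: "y \<in> Cpq K p q \<Longrightarrow> d10 K y \<in> Cpq K (p + 1) q"
    and d01_Cpq: "y \<in> Cpq K p q \<Longrightarrow> d01 K y \<in> Cpq K p (q + 1)"
    and dif_dif: "dif K (dif K x) = 0"
  using bigraded unfolding bigraded_complex_def rlinear_def additive_def
  by (simp_all add: image_subset_iff)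

lemma additive_dif: "additive (dif K)"
  using additive.add[OF additive_d21] additive.add[OF additive_d10] additive.add[OF additive_d01]
  unfolding additive_def dif_def by (simp add: algebra_simps)

lemma pr_zero [simp]: "pr K p q 0 = 0"
  by (rule additive.zero[OF additive_pr])

lemma pr_add: "pr K p q (x + y) = pr K p q x + pr K p q y"
  by (rule additive.add[OF additive_pr])

lemma pr_diff: "pr K p q (x - y) = pr K p q x - pr K p q y"
  by (rule additive.diff[OF additive_pr])

lemma pr_minus: "pr K p q (- x) = - pr K p q x"
  by (rule additive.minus[OF additive_pr])

lemma d21_zero [simp]: "d21 K 0 = 0"
  by (rule additive.zero[OF additive_d21])

lemma d10_zero [simp]: "d10 K 0 = 0"
  by (rule additive.zero[OF additive_d10])

lemma d01_zero [simp]: "d01 K 0 = 0"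
  by (rule additive.zero[OF additive_d01])

lemma dif_zero [simp]: "dif K 0 = 0"
  by (rule additive.zero[OF additive_dif])

lemma dif_diff: "dif K (x - y) = dif K x - dif K y"
  by (rule additive.diff[OF additive_dif])

lemma pr_eqI:
  assumes "\<And>p q. pr K p q x = pr K p q y"
  shows "x = y"
proof -
  have "(\<Sum>(p, q) \<in> {(p, q). pr K p q x \<noteq> 0}. pr K p q x)
      = (\<Sum>(p, q) \<in> {(p, q). pr K p q y \<noteq> 0}. pr K p q y)"
    by (simp only: assms)
  then show ?thesis by (simp only: sum_pr)
qed

lemma pr_in_Cpq: "pr K p q x \<in> Cpq K p q"
  unfolding Cpq_def by blast

lemma Cpq_iff: "x \<in> Cpq K p q \<longleftrightarrow> pr K p q x = x"
proof
  assume "x \<in> Cpq K p q"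
  then obtain z where "x = pr K p q z" unfolding Cpq_def by blast
  then show "pr K p q x = x" by (simp add: pr_pr)
next
  assume "pr K p q x = x"
  then show "x \<in> Cpq K p q" unfolding Cpq_def using rangeI[of "pr K p q" x] by simp
qed

lemma pr_Cpq: "x \<in> Cpq K p' q' \<Longrightarrow> pr K p q x = (if (p, q) = (p', q') then x else 0)"
  using pr_pr[of p q p' q' x] by (simp add: Cpq_iff)

lemma Cpq_iff_pr_eq_0: "x \<in> Cpq K p q \<longleftrightarrow> (\<forall>i j. (i, j) \<noteq> (p, q) \<longrightarrow> pr K i j x = 0)"
proof
  assume zero: "\<forall>i j. (i, j) \<noteq> (p, q) \<longrightarrow> pr K i j x = 0"
  have "pr K i j (pr K p q x) = pr K i j x" for i j
  proof (cases "(i, j) = (p, q)")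
    case False
    then have "pr K i j x = 0" using zero by blast
    with False show ?thesis by (auto simp: pr_pr)
  qed (simp add: pr_pr)
  then show "x \<in> Cpq K p q" using Cpq_iff pr_eqI by blast
qed (auto simp: pr_Cpq)

lemma zero_Cpq [simp]: "0 \<in> Cpq K p q"
  by (simp add: Cpq_iff)

lemma add_subgroup_Cpq: "add_subgroup (Cpq K p q)"
  unfolding add_subgroup_def by (simp add: Cpq_iff pr_add pr_minus)

lemma pr_Ck: "x \<in> Ck K k \<Longrightarrow> p + q \<noteq> k \<Longrightarrow> pr K p q x = 0"
  unfolding Ck_def by blast

lemma CkI: "(\<And>p q. p + q \<noteq> k \<Longrightarrow> pr K p q x = 0) \<Longrightarrow> x \<in> Ck K k"
  unfolding Ck_def by blast

lemma Cpq_subset_Ck: "Cpq K p q \<subseteq> Ck K (p + q)"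
  by (auto intro!: CkI simp: pr_Cpq)

lemma add_subgroup_Ck: "add_subgroup (Ck K k)"
  unfolding add_subgroup_def by (auto intro!: CkI simp: pr_Ck pr_add pr_minus)

lemma d21_Cpq_0: "y \<in> Cpq K p 0 \<Longrightarrow> d21 K y = 0"
  using d21_bidegree by fastforce

lemma d21_Cpq: "y \<in> Cpq K p q \<Longrightarrow> d21 K y \<in> Cpq K (p + 2) (q - 1)"
  using d21_bidegree[of y p q] by (cases "q = 0") auto

lemma pr_additive_eq_single:
  assumes g: "additive g"
    and others: "\<And>a b. (a, b) \<noteq> (a0, b0) \<Longrightarrow> pr K p q (g (pr K a b x)) = 0"
  shows "pr K p q (g x) = pr K p q (g (pr K a0 b0 x))"
proof -
  let ?S = "insert (a0, b0) {(a, b). pr K a b x \<noteq> 0}"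
  have fin: "finite ?S" using finite_support by simp
  have "x = (\<Sum>(a, b) \<in> ?S. pr K a b x)"
    using sum_pr[of x] finite_support[of x] by (simp add: sum.insert_if)
  then have "pr K p q (g x) = pr K p q (g (\<Sum>(a, b) \<in> ?S. pr K a b x))"
    by (rule arg_cong)
  also have "\<dots> = (\<Sum>i \<in> ?S. pr K p q (g (case i of (a, b) \<Rightarrow> pr K a b x)))"
    by (simp only: additive.sum[OF g] additive.sum[OF additive_pr])
  also have "\<dots> = (\<Sum>i \<in> ?S. if i = (a0, b0) then pr K p q (g (pr K a0 b0 x)) else 0)"
    by (rule sum.cong) (use others in auto)
  also have "\<dots> = pr K p q (g (pr K a0 b0 x))"
    using fin by simp
  finally show ?thesis .
qed

lemma pr_d21: "pr K p q (d21 K x) = (if 2 \<le> p then d21 K (pr K (p - 2) (q + 1) x) else 0)"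
proof -
  have others: "pr K p q (d21 K (pr K a b x)) = 0" if "(a, b) \<noteq> (p - 2, q + 1)" for a b
  proof (cases "b = 0")
    case True
    then show ?thesis using d21_Cpq_0[OF pr_in_Cpq] by simp
  next
    case False
    then show ?thesis using that pr_Cpq[OF d21_Cpq[OF pr_in_Cpq[of a b x]]] by auto
  qed
  have "pr K p q (d21 K x) = pr K p q (d21 K (pr K (p - 2) (q + 1) x))"
    by (rule pr_additive_eq_single[OF additive_d21 others])
  then show ?thesis
    using pr_Cpq[OF d21_Cpq[OF pr_in_Cpq[of "p - 2" "q + 1" x]]] by auto
qed

lemma pr_d10: "pr K p q (d10 K x) = (if 1 \<le> p then d10 K (pr K (p - 1) q x) else 0)"
proof -
  have others: "pr K p q (d10 K (pr K a b x)) = 0" if "(a, b) \<noteq> (p - 1, q)" for a b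
    using that pr_Cpq[OF d10_Cpq[OF pr_in_Cpq[of a b x]]] by auto
  have "pr K p q (d10 K x) = pr K p q (d10 K (pr K (p - 1) q x))"
    by (rule pr_additive_eq_single[OF additive_d10 others])
  then show ?thesis
    using pr_Cpq[OF d10_Cpq[OF pr_in_Cpq[of "p - 1" q x]]] by auto
qed

lemma pr_d01: "pr K p q (d01 K x) = (if 1 \<le> q then d01 K (pr K p (q - 1) x) else 0)"
proof -
  have others: "pr K p q (d01 K (pr K a b x)) = 0" if "(a, b) \<noteq> (p, q - 1)" for a b
    using that pr_Cpq[OF d01_Cpq[OF pr_in_Cpq[of a b x]]] by auto
  have "pr K p q (d01 K x) = pr K p q (d01 K (pr K p (q - 1) x))"
    by (rule pr_additive_eq_single[OF additive_d01 others])
  then show ?thesis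
    using pr_Cpq[OF d01_Cpq[OF pr_in_Cpq[of p "q - 1" x]]] by auto
qed

lemma pr_dif:
  "pr K p q (dif K x) =
     (if 2 \<le> p then d21 K (pr K (p - 2) (q + 1) x) else 0) +
     (if 1 \<le> p then d10 K (pr K (p - 1) q x) else 0) +
     (if 1 \<le> q then d01 K (pr K p (q - 1) x) else 0)"
  unfolding dif_def pr_add pr_d21 pr_d10 pr_d01 ..

lemma dif_Ck: "x \<in> Ck K k \<Longrightarrow> dif K x \<in> Ck K (Suc k)"
  by (rule CkI) (auto simp: pr_dif pr_Ck)

lemma pr_piq: "pr K i j (piq K r x) = (if r \<le> j then pr K i j x else 0)"
proof -
  let ?T = "{(a, b). pr K a b x \<noteq> 0 \<and> r \<le> b}"
  have fin: "finite ?T"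
    using finite_support[of x] by (rule rev_finite_subset) auto
  have "pr K i j (piq K r x) = (\<Sum>y \<in> ?T. pr K i j (case y of (a, b) \<Rightarrow> pr K a b x))"
    unfolding piq_def by (rule additive.sum[OF additive_pr])
  also have "\<dots> = (\<Sum>y \<in> ?T. if y = (i, j) then pr K i j x else 0)"
    by (rule sum.cong) (auto simp: pr_pr split: if_splits)
  also have "\<dots> = (if r \<le> j then pr K i j x else 0)"
    using fin by auto
  finally show ?thesis .
qed

lemma additive_piq: "additive (piq K r)"
  unfolding additive_def by (auto intro: pr_eqI simp: pr_piq pr_add)

lemma piq_zero [simp]: "piq K r 0 = 0"
  by (rule additive.zero[OF additive_piq])

lemma piq_diff: "piq K r (x - y) = piq K r x - piq K r y"
  by (rule additive.diff[OF additive_piq])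

lemma piq_0 [simp]: "piq K 0 x = x"
  by (rule pr_eqI) (simp add: pr_piq)

lemma piq_piq: "r \<le> s \<Longrightarrow> piq K s (piq K r x) = piq K s x"
  by (rule pr_eqI) (simp add: pr_piq)

lemma piq_Cpq: "x \<in> Cpq K p q \<Longrightarrow> piq K r x = (if r \<le> q then x else 0)"
  by (rule pr_eqI) (auto simp: pr_piq pr_Cpq)

lemma piq_Suc_eq_0_iff:
  assumes "x \<in> Ck K k"
  shows "piq K (Suc q) x = 0 \<longleftrightarrow> piq K q x \<in> Cpq K (k - q) q"
proof -
  have "piq K (Suc q) x = 0 \<longleftrightarrow> (\<forall>i j. q < j \<longrightarrow> pr K i j x = 0)"
  proof
    assume "piq K (Suc q) x = 0"
    then have "pr K i j (piq K (Suc q) x) = 0" for i j by simp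
    then show "\<forall>i j. q < j \<longrightarrow> pr K i j x = 0" unfolding pr_piq by (metis Suc_le_eq)
  qed (auto intro: pr_eqI simp: pr_piq)
  moreover have "piq K q x \<in> Cpq K (k - q) q \<longleftrightarrow> (\<forall>i j. q < j \<longrightarrow> pr K i j x = 0)"
    unfolding Cpq_iff_pr_eq_0 pr_piq
  proof (intro iffI allI impI)
    fix i j
    assume "\<forall>i j. (i, j) \<noteq> (k - q, q) \<longrightarrow> (if q \<le> j then pr K i j x else 0) = 0" "q < j"
    then show "pr K i j x = 0" by (metis less_imp_le_nat less_irrefl prod.inject)
  next
    fix i j
    assume "\<forall>i j. q < j \<longrightarrow> pr K i j x = 0" "(i, j) \<noteq> (k - q, q)"
    moreover have "pr K i q x = 0" if "i \<noteq> k - q"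
      using that pr_Ck[OF assms, of i q] by auto
    ultimately show "(if q \<le> j then pr K i j x else 0) = 0"
      by (cases "j = q") auto
  qed
  ultimately show ?thesis by simp
qed

lemma piq_1_eq_0_iff: "x \<in> Ck K k \<Longrightarrow> piq K 1 x = 0 \<longleftrightarrow> x \<in> Cpq K k 0"
  using piq_Suc_eq_0_iff[of x k 0] by simp

lemma add_subgroup_Zc: "add_subgroup (Zc K k)"
  unfolding Zc_def by (rule add_subgroup_kernel[OF add_subgroup_Ck additive_dif])

lemma add_subgroup_Bc: "add_subgroup (Bc K k)"
  using add_subgroup_image[OF add_subgroup_Ck additive_dif]
  unfolding Bc_def add_subgroup_def by auto

lemma Bc_subset_Zc: "Bc K k \<subseteq> Zc K k"
  using dif_Ck[of _ "k - 1"] add_subgroup_zero[OF add_subgroup_Ck]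
  unfolding Bc_def Zc_def by (auto simp: dif_dif)

lemma Bc_inter_Cpq: "Bc K k \<inter> Cpq K k 0 = {x \<in> Bc K k. piq K 1 x = 0}"
  using Bc_subset_Zc piq_1_eq_0_iff unfolding Zc_def by blast

lemma add_subgroup_Npq: "add_subgroup (Npq K p q)"
  using add_subgroup_Cpq
  unfolding Npq_def add_subgroup_def
  by (simp add: additive.add[OF additive_d01] additive.add[OF additive_d21]
      additive.minus[OF additive_d01] additive.minus[OF additive_d21])

lemma Npq_0_iff_dif_Cpq:
  assumes w: "w \<in> Cpq K p 0"
  shows "w \<in> Npq K p 0 \<longleftrightarrow> dif K w \<in> Cpq K (Suc p) 0"
proof -
  have d21: "d21 K w = 0" by (rule d21_Cpq_0[OF w])
  have "pr K p 1 (dif K w) = d01 K w"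
    using pr_Cpq[OF d10_Cpq[OF w], of p 1] pr_Cpq[OF d01_Cpq[OF w], of p 1]
    unfolding dif_def pr_add d21 by simp
  then show ?thesis
    using w d21 d10_Cpq[OF w] pr_Cpq[of "dif K w" "Suc p" 0 p 1]
    unfolding Npq_def dif_def by auto
qed

lemma ZN_0_eq: "ZN K 0 k = {x \<in> Zc K k. piq K 1 x = 0}"
proof -
  have "x \<in> Npq K k 0 \<and> dif K x = 0 \<longleftrightarrow> x \<in> Ck K k \<and> dif K x = 0 \<and> piq K 1 x = 0" for x
    using Npq_0_iff_dif_Cpq[of x k] piq_1_eq_0_iff[of x k] Cpq_subset_Ck[of k 0]
    unfolding Npq_def by auto
  then show ?thesis unfolding ZN_def Ndeg_def Zc_def by auto
qed

lemma BN_0_Suc: "BN K 0 (Suc k) = dif K ` Npq K k 0"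
  by (simp add: BN_def Ndeg_def)

lemma add_subgroup_BN_0_Suc: "add_subgroup (BN K 0 (Suc k))"
  unfolding BN_0_Suc by (rule add_subgroup_image[OF add_subgroup_Npq additive_dif])

definition is_lift :: "nat \<Rightarrow> 'a \<Rightarrow> 'a \<Rightarrow> bool" where
  "is_lift k \<xi> \<eta> \<longleftrightarrow> \<eta> \<in> Ck K k \<and> piq K 1 \<eta> = \<xi> \<and> piq K 1 (dif K \<eta>) = 0"

lemma Acal_iff: "\<xi> \<in> Acal K k \<longleftrightarrow> (\<exists>\<eta>. is_lift k \<xi> \<eta>)"
  unfolding Acal_def is_lift_def by blast

lemma dif_lift_Cpq: "is_lift k \<xi> \<eta> \<Longrightarrow> dif K \<eta> \<in> Cpq K (Suc k) 0"
  using dif_Ck piq_1_eq_0_iff unfolding is_lift_def by blast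

(* For k = 0 the d21-term is d21 (pr K 0 1 x) = 0, as k - 1 = 0 and x lies in C^0. *)
lemma pr_Suc_0_dif:
  "x \<in> Ck K k \<Longrightarrow> pr K (Suc k) 0 (dif K x) = d21 K (pr K (k - 1) 1 x) + d10 K (pr K k 0 x)"
  by (cases k) (auto simp: pr_dif pr_Ck)

lemma dif_lift_eq:
  assumes "is_lift k \<xi> \<eta>"
  shows "dif K \<eta> = d21 K (pr K (k - 1) 1 \<xi>) + d10 K (pr K k 0 \<eta>)"
proof -
  have "dif K \<eta> = pr K (Suc k) 0 (dif K \<eta>)"
    using dif_lift_Cpq[OF assms] by (simp add: Cpq_iff)
  also have "\<dots> = d21 K (pr K (k - 1) 1 \<eta>) + d10 K (pr K k 0 \<eta>)"
    using assms pr_Suc_0_dif unfolding is_lift_def by blast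
  finally show ?thesis
    using assms unfolding is_lift_def by (auto simp: pr_piq)
qed

lemma dif_lift_diff_in_BN:
  assumes "is_lift k \<xi> \<eta>" "is_lift k \<xi> \<eta>'"
  shows "dif K \<eta> - dif K \<eta>' \<in> BN K 0 (Suc k)"
proof -
  have "\<eta> - \<eta>' \<in> Ck K k" "piq K 1 (\<eta> - \<eta>') = 0"
    using assms add_subgroup_diff[OF add_subgroup_Ck] unfolding is_lift_def by (auto simp: piq_diff)
  then have "\<eta> - \<eta>' \<in> Cpq K k 0" using piq_1_eq_0_iff by blast
  moreover have "dif K (\<eta> - \<eta>') \<in> Cpq K (Suc k) 0"
    using dif_lift_Cpq[OF assms(1)] dif_lift_Cpq[OF assms(2)]
    by (simp add: dif_diff add_subgroup_diff[OF add_subgroup_Cpq])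
  ultimately have "\<eta> - \<eta>' \<in> Npq K k 0" using Npq_0_iff_dif_Cpq by blast
  then show ?thesis unfolding BN_0_Suc dif_diff[symmetric] by blast
qed

lemma rho_eq_coset:
  assumes "is_lift k \<xi> \<eta>"
  shows "rho K k \<xi> = (\<lambda>b. b + dif K \<eta>) ` BN K 0 (Suc k)"
proof -
  define \<eta>0 where "\<eta>0 = (SOME \<eta>. is_lift k \<xi> \<eta>)"
  have \<eta>0: "is_lift k \<xi> \<eta>0" unfolding \<eta>0_def using assms by (rule someI)
  have "rho K k \<xi> = (\<lambda>b. dif K \<eta>0 + b) ` BN K 0 (Suc k)"
    unfolding rho_def Let_def is_lift_def[symmetric] \<eta>0_def[symmetric] dif_lift_eq[OF \<eta>0]
    by simp
  also have "\<dots> = (\<lambda>b. b + dif K \<eta>0) ` BN K 0 (Suc k)"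
    by (simp add: add.commute)
  also have "\<dots> = (\<lambda>b. b + dif K \<eta>) ` BN K 0 (Suc k)"
    using coset_eq_iff[OF add_subgroup_BN_0_Suc] dif_lift_diff_in_BN[OF \<eta>0 assms] by blast
  finally show ?thesis .
qed

lemma ker_rho_eq: "ker_rho K k = piq K 1 ` Zc K k"
proof (intro equalityI subsetI)
  fix \<xi> assume "\<xi> \<in> ker_rho K k"
  then obtain \<eta> where \<eta>: "is_lift k \<xi> \<eta>" and "rho K k \<xi> = BN K 0 (Suc k)"
    unfolding ker_rho_def Acal_iff by auto
  then have "dif K \<eta> \<in> BN K 0 (Suc k)"
    using rho_eq_coset coset_eq_self_iff[OF add_subgroup_BN_0_Suc] by auto
  then obtain w where w: "w \<in> Npq K k 0" "dif K \<eta> = dif K w"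
    unfolding BN_0_Suc by blast
  then have "w \<in> Cpq K k 0" unfolding Npq_def by blast
  then have "w \<in> Ck K k" "piq K 1 w = 0" using Cpq_subset_Ck[of k 0] by (auto simp: piq_Cpq)
  then have "\<eta> - w \<in> Zc K k" "piq K 1 (\<eta> - w) = \<xi>"
    using \<eta> w(2) add_subgroup_diff[OF add_subgroup_Ck]
    unfolding is_lift_def Zc_def by (auto simp: dif_diff piq_diff)
  then show "\<xi> \<in> piq K 1 ` Zc K k" by (metis imageI)
next
  fix \<xi> assume "\<xi> \<in> piq K 1 ` Zc K k"
  then obtain \<zeta> where \<zeta>: "\<zeta> \<in> Zc K k" "\<xi> = piq K 1 \<zeta>" by blast
  then have lift: "is_lift k \<xi> \<zeta>" unfolding is_lift_def Zc_def by simp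
  moreover have "rho K k \<xi> = BN K 0 (Suc k)"
    using rho_eq_coset[OF lift] \<zeta>(1) unfolding Zc_def by simp
  ultimately show "\<xi> \<in> ker_rho K k" unfolding ker_rho_def Acal_iff by auto
qed

lemma piq_2_eq_0_iff: "x \<in> piq K 1 ` Ck K k \<Longrightarrow> piq K 2 x = 0 \<longleftrightarrow> x \<in> Cpq K (k - 1) 1"
  using piq_Suc_eq_0_iff[of _ k 1] piq_piq[of 1 2] by (auto simp: numeral_2_eq_2)

lemma Bcal_inter_Cpq: "Bcal K 1 k \<inter> Cpq K (k - 1) 1 = {x \<in> Bcal K 1 k. piq K 2 x = 0}"
proof -
  have "Bcal K 1 k \<subseteq> piq K 1 ` Ck K k"
    using Bc_subset_Zc unfolding Bcal_def Zc_def by blast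
  then show ?thesis using piq_2_eq_0_iff by blast
qed

lemma ker_varrho_eq: "ker_varrho K k = {x \<in> ker_rho K k. piq K 2 x = 0}"
proof -
  have "ker_rho K k \<subseteq> piq K 1 ` Ck K k"
    unfolding ker_rho_def Acal_def by blast
  then show ?thesis
    using piq_2_eq_0_iff unfolding ker_varrho_def Jcal_def ker_rho_def by blast
qed

lemma piq_Suc_dif: "y \<in> Ck K k \<Longrightarrow> piq K (Suc k) (dif K y) = d01 K (pr K 0 k y)"
  by (rule pr_eqI) (auto simp: pr_piq pr_dif pr_d01 pr_pr pr_Ck)

lemma d01_image_eq: "d01 K ` Cpq K 0 k = piq K (Suc k) ` Bcal K 1 (Suc k)"
proof -
  have "pr K 0 k ` Ck K k = Cpq K 0 k"
    using Cpq_subset_Ck[of 0 k] pr_in_Cpq by (force simp: Cpq_iff)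
  then have "d01 K ` Cpq K 0 k = (\<lambda>y. d01 K (pr K 0 k y)) ` Ck K k"
    by (metis image_image)
  also have "\<dots> = (\<lambda>y. piq K (Suc k) (piq K 1 (dif K y))) ` Ck K k"
    by (simp add: piq_Suc_dif piq_piq)
  also have "\<dots> = piq K (Suc k) ` Bcal K 1 (Suc k)"
    by (simp add: Bcal_def Bc_def image_image)
  finally show ?thesis .
qed

lemma zero_Ndeg: "0 \<in> Ndeg K j k"
  using add_subgroup_zero[OF add_subgroup_Npq] unfolding Ndeg_def by simp

lemma zero_BN: "0 \<in> BN K j k"
  using zero_Ndeg unfolding BN_def by force

lemma Ndeg_subset_Cpq: "Ndeg K m k \<subseteq> Cpq K (k - m) m"
  unfolding Ndeg_def Npq_def by auto

lemma Ndeg_subset_Ck: "Ndeg K m k \<subseteq> Ck K k"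
  using Cpq_subset_Ck[of "k - m" m] add_subgroup_zero[OF add_subgroup_Ck]
  unfolding Ndeg_def Npq_def by auto

lemma dif_Ndeg: "a \<in> Ndeg K m k \<Longrightarrow> dif K a \<in> Cpq K (Suc k - m) m"
  using d10_Cpq[of a "k - m" m] unfolding Ndeg_def Npq_def dif_def
  by (auto split: if_splits simp: Suc_diff_le)

lemma Mk_component:
  assumes "\<eta> \<in> Mk K k"
  obtains a where "a \<in> Ndeg K m k" "pr K (Suc k - m) m (dif K \<eta>) = dif K a"
proof (cases "m \<le> Suc k")
  case True
  then have "pr K (Suc k - m) m (dif K \<eta>) \<in> BN K m (Suc k)"
    using assms unfolding Mk_def by auto
  then show ?thesis using that unfolding BN_def by auto
next
  case False
  have "dif K \<eta> \<in> Ck K (Suc k)" using assms dif_Ck unfolding Mk_def by blast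
  then have "pr K (Suc k - m) m (dif K \<eta>) = dif K 0" using False pr_Ck by simp
  then show ?thesis using that zero_Ndeg by blast
qed

lemma Mk_diff_Ndeg:
  assumes "\<eta> \<in> Mk K k" "a \<in> Ndeg K m k" "pr K (Suc k - m) m (dif K \<eta>) = dif K a"
  shows "\<eta> - a \<in> Mk K k"
proof -
  have "\<eta> - a \<in> Ck K k"
    using assms Ndeg_subset_Ck add_subgroup_diff[OF add_subgroup_Ck] unfolding Mk_def by blast
  moreover have "pr K i j (dif K (\<eta> - a)) \<in> BN K j (k + 1)" if "i + j = k + 1" for i j
    using assms that zero_BN pr_Cpq[OF dif_Ndeg[OF assms(2)], of i j]
    unfolding Mk_def by (auto simp: dif_diff pr_diff)
  ultimately show ?thesis unfolding Mk_def by blast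
qed

lemma piq_dif_diff_Ndeg:
  assumes "\<eta> \<in> Ck K k" "piq K (Suc m) (dif K \<eta>) = 0"
    and "a \<in> Ndeg K m k" "pr K (Suc k - m) m (dif K \<eta>) = dif K a"
  shows "piq K m (dif K (\<eta> - a)) = 0"
proof -
  have "piq K m (dif K \<eta>) \<in> Cpq K (Suc k - m) m"
    using piq_Suc_eq_0_iff dif_Ck[OF assms(1)] assms(2) by blast
  then have "piq K m (dif K \<eta>) = dif K a"
    using assms(4) by (simp add: Cpq_iff pr_piq)
  then show ?thesis
    using piq_Cpq[OF dif_Ndeg[OF assms(3)]] by (simp add: dif_diff piq_diff)
qed

(* Subtracting the element of N^{k-m,m} given by Mk_component kills the (k+1-m, m)-component
   of d eta without changing pi_{m+1} eta. *)
lemma Mk_correction: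
  "\<eta> \<in> Mk K k \<Longrightarrow> piq K m (dif K \<eta>) = 0 \<Longrightarrow> \<exists>\<zeta>\<in>Zc K k. piq K m \<zeta> = piq K m \<eta>"
proof (induction m arbitrary: \<eta>)
  case 0
  then show ?case unfolding Mk_def Zc_def by auto
next
  case (Suc m)
  obtain a where a: "a \<in> Ndeg K m k" "pr K (Suc k - m) m (dif K \<eta>) = dif K a"
    using Mk_component[OF Suc.prems(1)] .
  have "\<eta> \<in> Ck K k" using Suc.prems(1) unfolding Mk_def by blast
  then obtain \<zeta> where \<zeta>: "\<zeta> \<in> Zc K k" "piq K m \<zeta> = piq K m (\<eta> - a)"
    using Suc.IH[OF Mk_diff_Ndeg[OF Suc.prems(1) a]] piq_dif_diff_Ndeg Suc.prems(2) a by blast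
  have "a \<in> Cpq K (k - m) m" using a(1) Ndeg_subset_Cpq by blast
  then have "piq K (Suc m) a = 0" by (simp add: piq_Cpq)
  have "piq K (Suc m) \<zeta> = piq K (Suc m) (piq K m \<zeta>)" by (simp add: piq_piq)
  also have "\<dots> = piq K (Suc m) (\<eta> - a)" by (simp add: \<zeta>(2) piq_piq)
  also have "\<dots> = piq K (Suc m) \<eta>" by (simp add: piq_diff \<open>piq K (Suc m) a = 0\<close>)
  finally show ?case using \<zeta>(1) by blast
qed

lemma Zcal_eq: "Zcal K q k = piq K q ` Zc K k"
proof (intro equalityI subsetI)
  fix x assume "x \<in> Zcal K q k"
  then obtain \<eta> where "\<eta> \<in> Mk K k" "piq K q (dif K \<eta>) = 0" "x = piq K q \<eta>"
    unfolding Zcal_def by blast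
  then show "x \<in> piq K q ` Zc K k" using Mk_correction by (metis image_iff)
next
  fix x assume "x \<in> piq K q ` Zc K k"
  then obtain \<zeta> where "\<zeta> \<in> Zc K k" "x = piq K q \<zeta>" by blast
  moreover from this have "\<zeta> \<in> Mk K k"
    using zero_BN unfolding Mk_def Zc_def by simp
  ultimately show "x \<in> Zcal K q k"
    unfolding Zcal_def Zc_def by auto
qed

lemma add_subgroup_Bcal: "add_subgroup (Bcal K q k)"
  unfolding Bcal_def by (rule add_subgroup_image[OF add_subgroup_Bc additive_piq])

lemma add_subgroup_ker_rho: "add_subgroup (ker_rho K k)"
  unfolding ker_rho_eq by (rule add_subgroup_image[OF add_subgroup_Zc additive_piq])

lemma Bcal_subset_ker_rho: "Bcal K 1 k \<subseteq> ker_rho K k"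
  unfolding Bcal_def ker_rho_eq using Bc_subset_Zc by (rule image_mono)

lemma Zcal_2_eq: "Zcal K 2 k = piq K 2 ` ker_rho K k"
  by (simp add: Zcal_eq ker_rho_eq image_image piq_piq)

end

theorem theorem5p5:
  fixes sc :: "'r::ring_1 \<Rightarrow> 'a::ab_group_add \<Rightarrow> 'a" and K :: "'a bicx"
  assumes "bigraded_complex sc K"
  shows
  \<comment> \<open>First diagram\<close>
  "(let X11 = Bc K 2 \<inter> Cpq K 2 0; X12 = Bc K 2; X13 = Bcal K 1 2;
        X21 = ZN K 0 2; X22 = Zc K 2; X23 = ker_rho K 2;
        p1 = piq K 1 in
     ses (agrp X11) (agrp X12) (agrp X13) id p1 \<and>
     ses (agrp X21) (agrp X22) (agrp X23) id p1 \<and>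
     ses (agrp X21 Mod X11) (agrp X22 Mod X12) (agrp X23 Mod X13)
         (induced (agrp X22) X12 id) (induced (agrp X23) X13 p1) \<and>
     ses (agrp X11) (agrp X21) (agrp X21 Mod X11) id (\<lambda>x. X11 #>\<^bsub>agrp X21\<^esub> x) \<and>
     ses (agrp X12) (agrp X22) (agrp X22 Mod X12) id (\<lambda>x. X12 #>\<^bsub>agrp X22\<^esub> x) \<and>
     ses (agrp X13) (agrp X23) (agrp X23 Mod X13) id (\<lambda>x. X13 #>\<^bsub>agrp X23\<^esub> x) \<and>
     (\<forall>x\<in>X12. id (p1 x) = p1 (id x)) \<and>
     (\<forall>x\<in>X21. induced (agrp X22) X12 id (X11 #>\<^bsub>agrp X21\<^esub> x) = X12 #>\<^bsub>agrp X22\<^esub> id x) \<and>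
     (\<forall>x\<in>X22. induced (agrp X23) X13 p1 (X12 #>\<^bsub>agrp X22\<^esub> x) = X13 #>\<^bsub>agrp X23\<^esub> p1 x))
   \<and>
  \<comment> \<open>Second diagram\<close>
   (let Y11 = Bcal K 1 2 \<inter> Cpq K 1 1; Y12 = Bcal K 1 2; Y13 = d01 K ` Cpq K 0 1;
        Y21 = ker_varrho K 2; Y22 = ker_rho K 2; Y23 = Zcal K 2 2;
        p2 = piq K 2 in
     ses (agrp Y11) (agrp Y12) (agrp Y13) id p2 \<and>
     ses (agrp Y21) (agrp Y22) (agrp Y23) id p2 \<and>
     ses (agrp Y21 Mod Y11) (agrp Y22 Mod Y12) (agrp Y23 Mod Y13)
         (induced (agrp Y22) Y12 id) (induced (agrp Y23) Y13 p2) \<and>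
     ses (agrp Y11) (agrp Y21) (agrp Y21 Mod Y11) id (\<lambda>x. Y11 #>\<^bsub>agrp Y21\<^esub> x) \<and>
     ses (agrp Y12) (agrp Y22) (agrp Y22 Mod Y12) id (\<lambda>x. Y12 #>\<^bsub>agrp Y22\<^esub> x) \<and>
     ses (agrp Y13) (agrp Y23) (agrp Y23 Mod Y13) id (\<lambda>x. Y13 #>\<^bsub>agrp Y23\<^esub> x) \<and>
     (\<forall>x\<in>Y12. id (p2 x) = p2 (id x)) \<and>
     (\<forall>x\<in>Y21. induced (agrp Y22) Y12 id (Y11 #>\<^bsub>agrp Y21\<^esub> x) = Y12 #>\<^bsub>agrp Y22\<^esub> id x) \<and>
     (\<forall>x\<in>Y22. induced (agrp Y23) Y13 p2 (Y12 #>\<^bsub>agrp Y22\<^esub> x) = Y13 #>\<^bsub>agrp Y23\<^esub> p2 x))"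
proof -
  interpret bigraded_cochain_complex sc K by (rule bigraded_cochain_complex.intro) (rule assms)
  have first: "exact_3x3_diagram (Bc K 2 \<inter> Cpq K 2 0) (Bc K 2) (Bcal K 1 2)
      (ZN K 0 2) (Zc K 2) (ker_rho K 2) (piq K 1)"
    using exact_3x3_diagram_kernel_image[OF additive_piq add_subgroup_Bc add_subgroup_Zc Bc_subset_Zc]
    by (simp only: Bc_inter_Cpq ZN_0_eq Bcal_def ker_rho_eq)
  have "Bcal K 1 2 \<inter> Cpq K 1 1 = {x \<in> Bcal K 1 2. piq K 2 x = 0}"
    using Bcal_inter_Cpq[of 2] by simp
  moreover have "d01 K ` Cpq K 0 1 = piq K 2 ` Bcal K 1 2"
    using d01_image_eq[of 1] by (simp add: numeral_2_eq_2)
  ultimately have second: "exact_3x3_diagram (Bcal K 1 2 \<inter> Cpq K 1 1) (Bcal K 1 2)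
      (d01 K ` Cpq K 0 1) (ker_varrho K 2) (ker_rho K 2) (Zcal K 2 2) (piq K 2)"
    using exact_3x3_diagram_kernel_image[OF additive_piq add_subgroup_Bcal add_subgroup_ker_rho
        Bcal_subset_ker_rho]
    by (simp only: ker_varrho_eq Zcal_2_eq)
  show ?thesis
    using first second unfolding exact_3x3_diagram_def Let_def by blast
qed

end
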